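(* Under the standing setup in the context, there are constants $K\ge1$, $C\ge0$ (depending only on $b,c,L,f$) such that \[\rho_\phi([x],[y])\le K\rho(x,y)+C\] for all $x,y\in S$ with $\rho(x,y)\ge f$.
   Context: A semi-metric on a set $Z$ is a function $d:Z\times Z\to[0,\infty)$ with $d(x,y)=0$ iff $x=y$ and $d(x,y)=d(y,x)$. For $b\ge1$, $c\ge0$, a $(b,c)$-metric is a semi-metric with $d(x,z)\le b(d(x,y)+d(y,z))+c$ for all $x,y,z$. Standing setup. $X$ is a topological space (in the paper an $n$-manifold) carrying a $(b,c)$-metric $\rho$. A collapsing set consists of: a subset $S\subseteq X$; a family $\mathcal F$ of pairwise disjoint nonempty subsets of $S$ ("fibers") whose union is $S$; and a subset $T\subseteq S$ meeting each fiber in exactly one point. The fibering is bounded: $f:=\sup_{F\in\mathcal F}\sup_{u,v\in F}\rho(u,v)<\infty$ ("length of the longest fiber"). For $a,a'\in T$, the length of a continuous path $\gamma:[0,1]\to T$ is $\ell(\gamma)=\sup\sum_{i=1}^k\rho(\gamma(t_{i-1}),\gamma(t_i))$ over partitions $0=t_0<\dots<t_k=1$, and $\rho_p(a,a')$ is the infimum of $\ell(\gamma)$ over continuous paths in $T$ from $a$ to $a'$. $T$ is a Lipschitz curve: there is $L\ge1$ with $\rho_p(a,a')\le L\,\rho(a,a')$ for all $a,a'\in T$. The collapsing relation is $x\sim y$ iff $x=y$ or $x,y$ lie in a common fiber; $X^*=X/\!\sim$, $\phi(x)=[x]$. For $x\in X$ let $r_x=\inf_{s\in S}\rho(x,s)$;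 assume this infimum is attained and fix $x_S\in S$ with $\rho(x,x_S)=r_x$, taking $x_S=x$ when $x\in S$. Let $x'$ denote the unique point of $T$ in the fiber containing $x_S$. The collapsed metric is $\rho_\phi([x],[y])=\rho(x,y)$ if $x,y\notin S$ and $\rho(x,y)\le r_x+r_y$, and $\rho_\phi([x],[y])=\rho_p(x',y')+r_x+r_y$ otherwise. *)

theory Defs
  imports "HOL-Analysis.Analysis"
begin

definition semi_metric_on :: "'a set \<Rightarrow> ('a \<Rightarrow> 'a \<Rightarrow> real) \<Rightarrow> bool" where
  "semi_metric_on Z \<rho> \<longleftrightarrow>
     (\<forall>x\<in>Z. \<forall>y\<in>Z. \<rho> x y \<ge> 0 \<and> (\<rho> x y = 0 \<longleftrightarrow> x = y) \<and> \<rho> x y = \<rho> y x)"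

definition bc_metric_on :: "'a set \<Rightarrow> ('a \<Rightarrow> 'a \<Rightarrow> real) \<Rightarrow> real \<Rightarrow> real \<Rightarrow> bool" where
  "bc_metric_on Z \<rho> b c \<longleftrightarrow> b \<ge> 1 \<and> c \<ge> 0 \<and> semi_metric_on Z \<rho> \<and>
     (\<forall>x\<in>Z. \<forall>y\<in>Z. \<forall>z\<in>Z. \<rho> x z \<le> b * (\<rho> x y + \<rho> y z) + c)"

definition collapsing_set :: "'a set \<Rightarrow> 'a set \<Rightarrow> 'a set set \<Rightarrow> 'a set \<Rightarrow> bool" where
  "collapsing_set Z S Fs T \<longleftrightarrow> S \<subseteq> Z \<and> (\<forall>F\<in>Fs. F \<noteq> {} \<and> F \<subseteq> S) \<and>
     pairwise disjnt Fs \<and> \<Union>Fs = S \<and> T \<subseteq> S \<and> (\<forall>F\<in>Fs. \<exists>!t. t \<in> T \<inter> F)"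

definition fiber_diams :: "('a \<Rightarrow> 'a \<Rightarrow> real) \<Rightarrow> 'a set set \<Rightarrow> real set" where
  "fiber_diams \<rho> Fs = {\<rho> u v | u v F. F \<in> Fs \<and> u \<in> F \<and> v \<in> F}"

definition bounded_fibering :: "('a \<Rightarrow> 'a \<Rightarrow> real) \<Rightarrow> 'a set set \<Rightarrow> bool" where
  "bounded_fibering \<rho> Fs \<longleftrightarrow> bdd_above (fiber_diams \<rho> Fs)"

definition fiber_length :: "('a \<Rightarrow> 'a \<Rightarrow> real) \<Rightarrow> 'a set set \<Rightarrow> real" where
  "fiber_length \<rho> Fs = Sup (fiber_diams \<rho> Fs)"

definition partition_sums :: "('a \<Rightarrow> 'a \<Rightarrow> real) \<Rightarrow> (real \<Rightarrow> 'a) \<Rightarrow> real set" where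
  "partition_sums \<rho> \<gamma> =
     {(\<Sum>i\<in>{1..k}. \<rho> (\<gamma> (t (i - 1))) (\<gamma> (t i))) | k t.
        k \<ge> 1 \<and> t 0 = 0 \<and> t k = 1 \<and> (\<forall>i<k. t i < t (Suc i))}"

definition path_length :: "('a \<Rightarrow> 'a \<Rightarrow> real) \<Rightarrow> (real \<Rightarrow> 'a) \<Rightarrow> ereal" where
  "path_length \<rho> \<gamma> = (SUP s\<in>partition_sums \<rho> \<gamma>. ereal s)"

definition paths_in :: "'a topology \<Rightarrow> 'a set \<Rightarrow> 'a \<Rightarrow> 'a \<Rightarrow> (real \<Rightarrow> 'a) set" where
  "paths_in X T a a' = {\<gamma>. continuous_map (top_of_set {0..1}) (subtopology X T) \<gamma> \<and>
                            \<gamma> 0 = a \<and> \<gamma> 1 = a'}"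

definition path_dist :: "'a topology \<Rightarrow> ('a \<Rightarrow> 'a \<Rightarrow> real) \<Rightarrow> 'a set \<Rightarrow> 'a \<Rightarrow> 'a \<Rightarrow> ereal" where
  "path_dist X \<rho> T a a' = (INF \<gamma>\<in>paths_in X T a a'. path_length \<rho> \<gamma>)"

definition lipschitz_curve :: "'a topology \<Rightarrow> ('a \<Rightarrow> 'a \<Rightarrow> real) \<Rightarrow> 'a set \<Rightarrow> real \<Rightarrow> bool" where
  "lipschitz_curve X \<rho> T L \<longleftrightarrow> L \<ge> 1 \<and>
     (\<forall>a\<in>T. \<forall>a'\<in>T. path_dist X \<rho> T a a' \<le> ereal (L * \<rho> a a'))"

definition dist_to_set :: "('a \<Rightarrow> 'a \<Rightarrow> real) \<Rightarrow> 'a set \<Rightarrow> 'a \<Rightarrow> real" where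
  "dist_to_set \<rho> S x = Inf (\<rho> x ` S)"

definition nearest_point_choice ::
  "'a set \<Rightarrow> ('a \<Rightarrow> 'a \<Rightarrow> real) \<Rightarrow> 'a set \<Rightarrow> ('a \<Rightarrow> 'a) \<Rightarrow> bool" where
  "nearest_point_choice Z \<rho> S xS \<longleftrightarrow>
     (\<forall>x\<in>Z. xS x \<in> S \<and> \<rho> x (xS x) = dist_to_set \<rho> S x \<and> (x \<in> S \<longrightarrow> xS x = x))"

definition fiber_of :: "'a set set \<Rightarrow> 'a \<Rightarrow> 'a set" where
  "fiber_of Fs z = (THE F. F \<in> Fs \<and> z \<in> F)"

definition T_point :: "'a set set \<Rightarrow> 'a set \<Rightarrow> 'a \<Rightarrow> 'a" where
  "T_point Fs T z = (THE t. t \<in> T \<and> t \<in> fiber_of Fs z)"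

definition collapse_rel :: "'a set set \<Rightarrow> 'a \<Rightarrow> 'a \<Rightarrow> bool" where
  "collapse_rel Fs x y \<longleftrightarrow> x = y \<or> (\<exists>F\<in>Fs. x \<in> F \<and> y \<in> F)"

text \<open>The collapsed metric rho_phi([x],[y]), written on representatives x, y
  (it is well-defined on classes of collapse_rel).\<close>
definition collapsed_dist ::
  "'a topology \<Rightarrow> ('a \<Rightarrow> 'a \<Rightarrow> real) \<Rightarrow> 'a set \<Rightarrow> 'a set set \<Rightarrow> 'a set \<Rightarrow> ('a \<Rightarrow> 'a)
     \<Rightarrow> 'a \<Rightarrow> 'a \<Rightarrow> ereal" where
  "collapsed_dist X \<rho> S Fs T xS x y =
     (let rx = dist_to_set \<rho> S x; ry = dist_to_set \<rho> S y in
      if x \<notin> S \<and> y \<notin> S \<and> \<rho> x y \<le> rx + ry then ereal (\<rho> x y)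
      else path_dist X \<rho> T (T_point Fs T (xS x)) (T_point Fs T (xS y)) + ereal rx + ereal ry)"

definition standing_setup ::
  "'a topology \<Rightarrow> ('a \<Rightarrow> 'a \<Rightarrow> real) \<Rightarrow> real \<Rightarrow> real \<Rightarrow> 'a set \<Rightarrow> 'a set set \<Rightarrow> 'a set
     \<Rightarrow> real \<Rightarrow> ('a \<Rightarrow> 'a) \<Rightarrow> bool" where
  "standing_setup X \<rho> b c S Fs T L xS \<longleftrightarrow>
     bc_metric_on (topspace X) \<rho> b c \<and> collapsing_set (topspace X) S Fs T \<and>
     bounded_fibering \<rho> Fs \<and> lipschitz_curve X \<rho> T L \<and>
     nearest_point_choice (topspace X) \<rho> S xS"

end

theory Submission
  imports Defs
begin

text \<open>On S the collapsed distance is the path distance in T between the points of T in the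
  fibres of x and y. Moving each endpoint inside its fibre costs at most f, so two applications of
  the (b,c)-triangle inequality bound the \<rho>-distance of these points by b^2 \<rho>(x,y) + const,
  and the Lipschitz property of T turns this into the bound with K = L b^2.\<close>

lemma fiber_of_eq:
  assumes "collapsing_set Z S Fs T" and "F \<in> Fs" and "x \<in> F"
  shows "fiber_of Fs x = F"
  unfolding fiber_of_def
proof (rule the_equality)
  show "F \<in> Fs \<and> x \<in> F" using assms(2,3) by simp
  fix G assume G: "G \<in> Fs \<and> x \<in> G"
  have "pairwise disjnt Fs" using assms(1) unfolding collapsing_set_def by simp
  then have "G = F \<or> disjnt G F" using G assms(2) unfolding pairwise_def by blast
  with G assms(3) show "G = F" by (auto simp: disjnt_iff)
qed

lemma T_point_in_fiber:
  assumes cs: "collapsing_set Z S Fs T" and x: "x \<in> S"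
  obtains F where "F \<in> Fs" "x \<in> F" "T_point Fs T x \<in> F" "T_point Fs T x \<in> T"
proof -
  have "\<Union>Fs = S" and unique: "\<forall>F\<in>Fs. \<exists>!t. t \<in> T \<inter> F"
    using cs unfolding collapsing_set_def by simp_all
  then obtain F where F: "F \<in> Fs" "x \<in> F" using x by (metis UnionE)
  from unique F(1) have "\<exists>!t. t \<in> T \<inter> F" ..
  then obtain t where t: "t \<in> T \<inter> F" "\<And>s. s \<in> T \<inter> F \<Longrightarrow> s = t"
    by (metis ex1E)
  have "T_point Fs T x = t"
    unfolding T_point_def fiber_of_eq[OF cs F]
  proof (rule the_equality)
    show "t \<in> T \<and> t \<in> F" using t(1) by simp
  qed (use t(2) in simp)
  with t(1) show thesis by (intro that[OF F]) simp_all
qed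

lemma dist_T_point_le_fiber_length:
  assumes "collapsing_set Z S Fs T" and "bounded_fibering \<rho> Fs" and "x \<in> S"
  shows "\<rho> x (T_point Fs T x) \<le> fiber_length \<rho> Fs"
proof -
  obtain F where "F \<in> Fs" "x \<in> F" "T_point Fs T x \<in> F"
    using T_point_in_fiber[OF assms(1,3)] .
  then have "\<rho> x (T_point Fs T x) \<in> fiber_diams \<rho> Fs" unfolding fiber_diams_def by blast
  with assms(2) show ?thesis
    unfolding fiber_length_def bounded_fibering_def by (intro cSup_upper)
qed

lemma collapsed_dist_on_collapsing_set:
  assumes "semi_metric_on Z \<rho>" and "nearest_point_choice Z \<rho> S xS" and "S \<subseteq> Z"
    and "x \<in> S" and "y \<in> S"
  shows "collapsed_dist X \<rho> S Fs T xS x y = path_dist X \<rho> T (T_point Fs T x) (T_point Fs T y)"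
proof -
  have on_S: "xS z = z \<and> dist_to_set \<rho> S z = 0" if "z \<in> S" for z
    using assms(1-3) that unfolding nearest_point_choice_def semi_metric_on_def by (metis subsetD)
  show ?thesis
    unfolding collapsed_dist_def Let_def
    using on_S[OF assms(4)] on_S[OF assms(5)] assms(4) by (simp add: zero_ereal_def)
qed

lemma bc_metric_move_endpoints:
  assumes bc: "bc_metric_on Z \<rho> b c"
    and Z: "x \<in> Z" "y \<in> Z" "x' \<in> Z" "y' \<in> Z"
    and near: "\<rho> x x' \<le> f" "\<rho> y y' \<le> f"
  shows "\<rho> x' y' \<le> b * b * \<rho> x y + (b * f + b * b * f + b * c + c)"
proof -
  have b: "b \<ge> 1"
    and tri: "\<And>p q r. p \<in> Z \<Longrightarrow> q \<in> Z \<Longrightarrow> r \<in> Z \<Longrightarrow> \<rho> p r \<le> b * (\<rho> p q + \<rho> q r) + c"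
    and sym: "\<rho> x' x = \<rho> x x'"
    using bc Z unfolding bc_metric_on_def semi_metric_on_def by auto
  have "\<rho> x y' \<le> b * (\<rho> x y + f) + c"
    using tri[OF Z(1,2,4)] near(2) b by (smt (verit) mult_left_mono)
  then have "\<rho> x' x + \<rho> x y' \<le> f + (b * (\<rho> x y + f) + c)"
    using near(1) sym by linarith
  then have "\<rho> x' y' \<le> b * (f + (b * (\<rho> x y + f) + c)) + c"
    using tri[OF Z(3,1,4)] b by (smt (verit) mult_left_mono)
  then show ?thesis by (simp add: algebra_simps)
qed

theorem lemma2p3:
  fixes b c L f :: real
  shows "\<exists>K C. K \<ge> 1 \<and> C \<ge> 0 \<and>
    (\<forall>(X :: 'a topology) \<rho> S Fs T xS.
       standing_setup X \<rho> b c S Fs T L xS \<and> fiber_length \<rho> Fs = f \<longrightarrow>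
       (\<forall>x\<in>S. \<forall>y\<in>S. \<rho> x y \<ge> f \<longrightarrow>
          collapsed_dist X \<rho> S Fs T xS x y \<le> ereal (K * \<rho> x y + C)))"
proof (intro exI conjI allI impI ballI)
  let ?K = "max 1 (L * b * b)" and ?C = "max 0 (L * (b * f + b * b * f + b * c + c))"
  show "?K \<ge> 1" "?C \<ge> 0" by simp_all
  fix X :: "'a topology" and \<rho> S Fs T xS x y
  assume "standing_setup X \<rho> b c S Fs T L xS \<and> fiber_length \<rho> Fs = f"
    and x: "x \<in> S" and y: "y \<in> S"
  then have bc: "bc_metric_on (topspace X) \<rho> b c" and cs: "collapsing_set (topspace X) S Fs T"
    and bf: "bounded_fibering \<rho> Fs" and lc: "lipschitz_curve X \<rho> T L"
    and np: "nearest_point_choice (topspace X) \<rho> S xS" and f: "fiber_length \<rho> Fs = f"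
    unfolding standing_setup_def by simp_all
  let ?x' = "T_point Fs T x" and ?y' = "T_point Fs T y"
  have T: "?x' \<in> T" "?y' \<in> T" using T_point_in_fiber[OF cs] x y by metis+
  have "S \<subseteq> topspace X" "T \<subseteq> S" using cs unfolding collapsing_set_def by simp_all
  with x y T have Z: "x \<in> topspace X" "y \<in> topspace X" "?x' \<in> topspace X" "?y' \<in> topspace X"
    by auto
  have "\<rho> x y \<ge> 0" and "L \<ge> 1"
    using bc Z lc unfolding bc_metric_on_def semi_metric_on_def lipschitz_curve_def by auto
  have "\<rho> ?x' ?y' \<le> b * b * \<rho> x y + (b * f + b * b * f + b * c + c)"
    using bc_metric_move_endpoints[OF bc Z] dist_T_point_le_fiber_length[OF cs bf] x y f
    by simp
  then have "L * \<rho> ?x' ?y' \<le> L * (b * b * \<rho> x y + (b * f + b * b * f + b * c + c))"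
    using \<open>L \<ge> 1\<close> by (intro mult_left_mono) simp_all
  also have "\<dots> = L * b * b * \<rho> x y + L * (b * f + b * b * f + b * c + c)"
    by (simp add: algebra_simps)
  also have "\<dots> \<le> ?K * \<rho> x y + ?C"
    using \<open>\<rho> x y \<ge> 0\<close> by (intro add_mono mult_right_mono) simp_all
  finally have "path_dist X \<rho> T ?x' ?y' \<le> ereal (?K * \<rho> x y + ?C)"
    using lc T unfolding lipschitz_curve_def by (meson ereal_less_eq(3) order_trans)
  moreover have "collapsed_dist X \<rho> S Fs T xS x y = path_dist X \<rho> T ?x' ?y'"
    using collapsed_dist_on_collapsing_set[OF _ np \<open>S \<subseteq> topspace X\<close> x y] bc
    unfolding bc_metric_on_def by simp
  ultimately show "collapsed_dist X \<rho> S Fs T xS x y \<le> ereal (?K * \<rho> x y + ?C)"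
    by simp
qed

end
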